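(* Assume the standing hypotheses and let $p\in U_\delta(p_0)$, $\mu>0$. The following are equivalent: (i) $M(p)$ is an eigenvalue of $H_\mu(p)$ (and then the eigenfunctions are $f(q)=\frac{C\mu(p)\varphi(q)}{M(p)-w_p(q)}\in L^2(\mathbb{T}^3)$, $C\neq0$ constant); (ii) $\varphi(\mathbf{q}_0(p))=0$ and $\Delta(\mu,p;M(p))=0$; (iii) $\varphi(\mathbf{q}_0(p))=0$ and $\mu=\mu(p)$.
   Context: Let $\mathbb{T}^3=(\mathbb{R}/2\pi\mathbb{Z})^3$, identified with $(-\pi,\pi]^3$, with Lebesgue measure $ds$. Standing hypotheses: $\varphi:\mathbb{T}^3\to\mathbb{R}$ is real-analytic and not identically zero; $w:\mathbb{T}^3\times\mathbb{T}^3\to\mathbb{R}$ is real-analytic with a unique global maximum at $(p_0,q_0)$, which is non-degenerate (negative definite Hessian). Write $w_p(q)=w(p,q)$, $M(p)=\max_q w_p(q)$. For $\mu>0$, $p\in\mathbb{T}^3$, $H_\mu(p)$ is the operator on $L^2(\mathbb{T}^3)$ given by $(H_\mu(p)f)(q)=w_p(q)f(q)+\mu\,\varphi(q)\int_{\mathbb{T}^3}\varphi(t)f(t)\,dt$. Fix $\delta>0$ small enough that on the $\delta$-neighborhood $U_\delta(p_0)\subset\mathbb{T}^3$ of $p_0$ there is a real-analytic map $\mathbf{q}_0:U_\delta(p_0)\to\mathbb{T}^3$ such that, for every $p\in U_\delta(p_0)$, $\mathbf{q}_0(p)$ is the unique maximum point of $w_p$ and this maximum is non-degenerate (such $\delta$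 exists). For $p\in U_\delta(p_0)$, $\frac{1}{\mu(p)}=\int_{\mathbb{T}^3}\frac{\varphi^2(s)\,ds}{M(p)-w_p(s)}$ (finite and positive), and $\Delta(\mu,p;M(p)):=1-\mu\int_{\mathbb{T}^3}\frac{\varphi^2(s)\,ds}{M(p)-w_p(s)}=1-\mu/\mu(p)$. "$M(p)$ is an eigenvalue" means $H_\mu(p)f=M(p)f$ has a nonzero solution $f\in L^2(\mathbb{T}^3)$. *)

theory Defs
  imports "HOL-Analysis.Analysis"
begin

text \<open>Points of the torus T^3 = (R/2 pi Z)^3 are represented by vectors in R^3;
  functions on T^3 are 2 pi-periodic functions in each coordinate.\<close>

definition torus_eq :: "real^3 \<Rightarrow> real^3 \<Rightarrow> bool" where
  "torus_eq x y \<longleftrightarrow> (\<forall>i. \<exists>k::int. x $ i - y $ i = 2 * pi * of_int k)"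

definition T3_periodic :: "(real^3 \<Rightarrow> 'b) \<Rightarrow> bool" where
  "T3_periodic f \<longleftrightarrow> (\<forall>x y. torus_eq x y \<longrightarrow> f x = f y)"

definition T3_periodic2 :: "(real^3 \<Rightarrow> real^3 \<Rightarrow> 'b) \<Rightarrow> bool" where
  "T3_periodic2 w \<longleftrightarrow> (\<forall>p p' q q'. torus_eq p p' \<longrightarrow> torus_eq q q' \<longrightarrow> w p q = w p' q')"

text \<open>Fundamental domain (-pi,pi]^3 of the torus, with Lebesgue measure on it.\<close>
definition T3dom :: "(real^3) set" where
  "T3dom = {x. \<forall>i. - pi < x $ i \<and> x $ i \<le> pi}"

abbreviation T3meas :: "(real^3) measure" where
  "T3meas \<equiv> lebesgue_on T3dom"

definition multi_indices :: "('a::euclidean_space \<Rightarrow> nat) set" where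
  "multi_indices = {\<alpha>. \<forall>b. b \<notin> Basis \<longrightarrow> \<alpha> b = 0}"

definition real_analytic_on :: "('a::euclidean_space \<Rightarrow> real) \<Rightarrow> 'a set \<Rightarrow> bool" where
  "real_analytic_on f S \<longleftrightarrow>
     (\<forall>x\<in>S. \<exists>r>0. \<exists>c::('a \<Rightarrow> nat) \<Rightarrow> real. \<forall>y\<in>ball x r.
        ((\<lambda>\<alpha>. c \<alpha> * (\<Prod>b\<in>Basis. ((y - x) \<bullet> b) ^ \<alpha> b)) has_sum f y) multi_indices)"

definition neg_def_hessian_at :: "('a::real_inner \<Rightarrow> real) \<Rightarrow> 'a \<Rightarrow> bool" where
  "neg_def_hessian_at f q \<longleftrightarrow>
     (\<exists>g G. (\<forall>x. (f has_derivative (\<lambda>h. g x \<bullet> h)) (at x)) \<and>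
            (g has_derivative G) (at q) \<and> (\<forall>h. h \<noteq> 0 \<longrightarrow> G h \<bullet> h < 0))"

definition Mmax :: "(real^3 \<Rightarrow> real^3 \<Rightarrow> real) \<Rightarrow> real^3 \<Rightarrow> real" where
  "Mmax w p = (SUP q. w p q)"

definition L2_T3 :: "(real^3 \<Rightarrow> complex) set" where
  "L2_T3 = {f. f \<in> borel_measurable T3meas \<and> integrable T3meas (\<lambda>q. (cmod (f q))\<^sup>2)}"

definition Hop :: "real \<Rightarrow> (real^3 \<Rightarrow> real) \<Rightarrow> (real^3 \<Rightarrow> real^3 \<Rightarrow> real) \<Rightarrow> real^3
                   \<Rightarrow> (real^3 \<Rightarrow> complex) \<Rightarrow> real^3 \<Rightarrow> complex" where
  "Hop \<mu> \<phi> w p f q = of_real (w p q) * f q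
      + of_real (\<mu> * \<phi> q) * (\<integral>t. of_real (\<phi> t) * f t \<partial>T3meas)"

definition is_eigenfunction ::
  "real \<Rightarrow> (real^3 \<Rightarrow> real) \<Rightarrow> (real^3 \<Rightarrow> real^3 \<Rightarrow> real) \<Rightarrow> real^3 \<Rightarrow> real \<Rightarrow> (real^3 \<Rightarrow> complex) \<Rightarrow> bool" where
  "is_eigenfunction \<mu> \<phi> w p E f \<longleftrightarrow>
     f \<in> L2_T3 \<and> \<not> (AE q in T3meas. f q = 0) \<and>
     (AE q in T3meas. Hop \<mu> \<phi> w p f q = of_real E * f q)"

definition is_eigenvalue ::
  "real \<Rightarrow> (real^3 \<Rightarrow> real) \<Rightarrow> (real^3 \<Rightarrow> real^3 \<Rightarrow> real) \<Rightarrow> real^3 \<Rightarrow> real \<Rightarrow> bool" where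
  "is_eigenvalue \<mu> \<phi> w p E \<longleftrightarrow> (\<exists>f. is_eigenfunction \<mu> \<phi> w p E f)"

definition mu_crit :: "(real^3 \<Rightarrow> real) \<Rightarrow> (real^3 \<Rightarrow> real^3 \<Rightarrow> real) \<Rightarrow> real^3 \<Rightarrow> real" where
  "mu_crit \<phi> w p = 1 / (\<integral>s. (\<phi> s)\<^sup>2 / (Mmax w p - w p s) \<partial>T3meas)"

definition Delta :: "real \<Rightarrow> (real^3 \<Rightarrow> real) \<Rightarrow> (real^3 \<Rightarrow> real^3 \<Rightarrow> real) \<Rightarrow> real^3 \<Rightarrow> real" where
  "Delta \<mu> \<phi> w p = 1 - \<mu> * (\<integral>s. (\<phi> s)\<^sup>2 / (Mmax w p - w p s) \<partial>T3meas)"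

end

(*
  At the threshold E = M(p) the eigenvalue equation reads (E - w_p) f = mu phi <phi, f>, so every
  eigenfunction is a multiple of mu phi / (E - w_p), and pairing with phi turns the equation into
  mu \<integral> phi^2 / (E - w_p) = 1, i.e. Delta = 0. The candidate lies in L^2 exactly when phi vanishes
  at the maximum point q0(p): there E - w_p is comparable to |q - q0(p)|^2 by non-degeneracy, and in
  dimension three |h|^-4 is not integrable at 0 whereas |h|^-2 is, the latter being the right bound
  because the analytic phi is Lipschitz near q0(p).
*)

theory Submission
  imports Defs
begin

lemma abs_summable_at_diagonal:
  fixes v :: "'a::euclidean_space"
  assumes "(\<lambda>\<alpha>. c \<alpha> * (\<Prod>b\<in>Basis. (v \<bullet> b) ^ \<alpha> b)) summable_on A"
    and "\<And>b. b \<in> Basis \<Longrightarrow> v \<bullet> b = t" and "t \<ge> 0"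
  shows "(\<lambda>\<alpha>. \<bar>c \<alpha>\<bar> * t ^ (\<Sum>b\<in>Basis. \<alpha> b)) summable_on A"
proof -
  have "(\<lambda>\<alpha>. c \<alpha> * (\<Prod>b\<in>Basis. (v \<bullet> b) ^ \<alpha> b)) = (\<lambda>\<alpha>. c \<alpha> * t ^ (\<Sum>b\<in>Basis. \<alpha> b))"
    using assms(2) by (simp add: power_sum)
  then have "(\<lambda>\<alpha>. norm (c \<alpha> * t ^ (\<Sum>b\<in>Basis. \<alpha> b))) summable_on A"
    using assms(1) summable_on_iff_abs_summable_on_real by metis
  then show ?thesis using assms(3) by (simp add: abs_mult)
qed

lemma monomial_increment_le:
  fixes h :: "'a::euclidean_space"
  assumes "\<alpha> \<in> multi_indices" and "norm h \<le> t" and "0 < t"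
  shows "\<bar>(\<Prod>b\<in>Basis. (h \<bullet> b) ^ \<alpha> b) - (\<Prod>b\<in>Basis. 0 ^ \<alpha> b)\<bar>
           \<le> norm h / t * t ^ (\<Sum>b\<in>Basis. \<alpha> b)"
proof (cases "\<alpha> = (\<lambda>_. 0)")
  case False
  then obtain b0 where "\<alpha> b0 \<noteq> 0" by auto
  moreover from this have "b0 \<in> Basis" using assms(1) unfolding multi_indices_def by auto
  ultimately have zero: "(\<Prod>b\<in>Basis. (0::real) ^ \<alpha> b) = 0"
    and "\<alpha> b0 \<le> (\<Sum>b\<in>Basis. \<alpha> b)"
    by (auto intro!: prod_zero member_le_sum)
  then obtain m where m: "(\<Sum>b\<in>Basis. \<alpha> b) = Suc m"
    using \<open>\<alpha> b0 \<noteq> 0\<close> not0_implies_Suc by force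
  have "\<bar>\<Prod>b\<in>Basis. (h \<bullet> b) ^ \<alpha> b\<bar> \<le> (\<Prod>b\<in>Basis. norm h ^ \<alpha> b)"
    unfolding abs_prod power_abs by (intro prod_mono power_mono conjI) (auto simp: Basis_le_norm)
  also have "\<dots> = norm h * norm h ^ m" using m by (simp add: power_sum[symmetric])
  also have "\<dots> \<le> norm h * t ^ m" using assms(2) by (intro mult_left_mono power_mono) auto
  also have "\<dots> = norm h / t * t ^ (\<Sum>b\<in>Basis. \<alpha> b)" using assms(3) m by simp
  finally show ?thesis unfolding zero by simp
qed (use assms in simp)

lemma real_analytic_on_locally_lipschitz:
  fixes f :: "'a::euclidean_space \<Rightarrow> real"
  assumes "real_analytic_on f S" and "x \<in> S"
  shows "\<exists>t>0. \<exists>K. \<forall>h. norm h \<le> t \<longrightarrow> \<bar>f (x + h) - f x\<bar> \<le> K * norm h"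
proof -
  obtain r c where r: "r > 0" and series: "\<And>y. y \<in> ball x r \<Longrightarrow>
      ((\<lambda>\<alpha>. c \<alpha> * (\<Prod>b\<in>Basis. ((y - x) \<bullet> b) ^ \<alpha> b)) has_sum f y) multi_indices"
    using assms unfolding real_analytic_on_def by blast
  define t where "t = r / (2 * DIM('a))"
  have "1 < 2 * real DIM('a)" using DIM_positive[where 'a='a] by linarith
  then have "r / (2 * real DIM('a)) < r / 1" using r by (intro divide_strict_left_mono) auto
  then have t: "0 < t" "t < r" using r by (auto simp: t_def)
  define majorant where "majorant \<alpha> = \<bar>c \<alpha>\<bar> * t ^ (\<Sum>b\<in>Basis. \<alpha> b)" for \<alpha>
  have "majorant summable_on multi_indices"
  proof -
    define v :: 'a where "v = (\<Sum>b\<in>Basis. t *\<^sub>R b)"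
    have "norm v \<le> (\<Sum>b\<in>(Basis::'a set). norm (t *\<^sub>R b))" unfolding v_def by (rule norm_sum)
    also have "\<dots> < r" using r t by (simp add: t_def field_simps)
    finally have "x + v \<in> ball x r" by (simp add: dist_norm)
    from series[OF this]
    have "(\<lambda>\<alpha>. c \<alpha> * (\<Prod>b\<in>Basis. (v \<bullet> b) ^ \<alpha> b)) summable_on multi_indices"
      by (auto simp: summable_on_def)
    moreover have "v \<bullet> b = t" if "b \<in> Basis" for b
      using that by (simp add: v_def inner_sum_left inner_Basis if_distrib cong: if_cong)
    ultimately show ?thesis
      unfolding majorant_def using t(1) by (intro abs_summable_at_diagonal) auto
  qed
  define K where "K = infsum majorant multi_indices / t"
  have "\<bar>f (x + h) - f x\<bar> \<le> K * norm h" if h: "norm h \<le> t" for h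
  proof -
    define D where "D \<alpha> = c \<alpha> * ((\<Prod>b\<in>Basis. (h \<bullet> b) ^ \<alpha> b) - (\<Prod>b\<in>Basis. 0 ^ \<alpha> b))" for \<alpha>
    have "x \<in> ball x r" "x + h \<in> ball x r" using r h t by (auto simp: dist_norm)
    from has_sum_add[OF series[OF this(2)] has_sum_uminusI[OF series[OF this(1)]]]
    have D_sum: "(D has_sum (f (x + h) - f x)) multi_indices"
      unfolding D_def by (simp add: right_diff_distrib)
    have D_bound: "norm (D \<alpha>) \<le> norm h / t * majorant \<alpha>" if "\<alpha> \<in> multi_indices" for \<alpha>
      using mult_left_mono[OF monomial_increment_le[OF that h t(1)], of "\<bar>c \<alpha>\<bar>"]
      by (simp add: D_def majorant_def abs_mult ac_simps)
    have scaled: "(\<lambda>\<alpha>. norm h / t * majorant \<alpha>) summable_on multi_indices"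
      using \<open>majorant summable_on multi_indices\<close> by (rule summable_on_cmult_right)
    then have D_abs: "(\<lambda>\<alpha>. norm (D \<alpha>)) summable_on multi_indices"
      using summable_on_comparison_test D_bound by fastforce
    have "\<bar>f (x + h) - f x\<bar> \<le> infsum (\<lambda>\<alpha>. norm (D \<alpha>)) multi_indices"
      using norm_has_sum_bound[OF _ D_sum] D_abs by (simp add: summable_iff_has_sum_infsum)
    also have "\<dots> \<le> infsum (\<lambda>\<alpha>. norm h / t * majorant \<alpha>) multi_indices"
      using D_abs scaled D_bound by (intro infsum_mono) auto
    also have "\<dots> = K * norm h" unfolding K_def infsum_cmult_right' by simp
    finally show ?thesis .
  qed
  then show ?thesis using t by blast
qed

lemma locally_lipschitz_at_imp_isCont:
  fixes f :: "'a::real_normed_vector \<Rightarrow> real"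
  assumes "t > 0" and "\<And>h. norm h \<le> t \<Longrightarrow> \<bar>f (x + h) - f x\<bar> \<le> K * norm h"
  shows "isCont f x"
proof -
  have "eventually (\<lambda>h. norm (f (x + h) - f x) \<le> K * norm h) (at 0)"
    using assms unfolding eventually_at_le by (auto simp: dist_norm)
  moreover have "((\<lambda>h. K * norm h) \<longlongrightarrow> 0) (at (0::'a))"
    by (auto intro!: tendsto_eq_intros)
  ultimately have "((\<lambda>h. f (x + h) - f x) \<longlongrightarrow> 0) (at 0)"
    by (rule Lim_null_comparison)
  then show ?thesis unfolding isCont_iff by (rule LIM_zero_cancel)
qed

lemma real_analytic_on_imp_continuous_on:
  fixes f :: "'a::euclidean_space \<Rightarrow> real"
  assumes "real_analytic_on f S" and "open S"
  shows "continuous_on S f"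
  using real_analytic_on_locally_lipschitz[OF assms(1)] locally_lipschitz_at_imp_isCont
  by (metis continuous_at_imp_continuous_on)

lemma neg_def_linear_quadratic_bounds:
  fixes G :: "'a::euclidean_space \<Rightarrow> 'a"
  assumes "linear G" and neg: "\<And>h. h \<noteq> 0 \<Longrightarrow> G h \<bullet> h < 0"
  obtains c B where "c > 0" "B > 0"
    "\<And>h. - B * (norm h)\<^sup>2 \<le> G h \<bullet> h" "\<And>h. G h \<bullet> h \<le> - c * (norm h)\<^sup>2"
proof -
  have "continuous_on (sphere 0 1) (\<lambda>y. G y \<bullet> y)"
    using assms(1) by (intro continuous_intros linear_continuous_on) (simp add: linear_linear)
  moreover obtain b :: 'a where "b \<in> Basis" using nonempty_Basis by blast
  then have "sphere (0::'a) 1 \<noteq> {}" by (auto intro!: exI[of _ b])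
  ultimately obtain u v where "u \<in> sphere 0 1" "v \<in> sphere 0 1"
    and max: "\<forall>y\<in>sphere 0 1. G y \<bullet> y \<le> G u \<bullet> u" and min: "\<forall>y\<in>sphere 0 1. G v \<bullet> v \<le> G y \<bullet> y"
    using continuous_attains_sup[OF compact_sphere] continuous_attains_inf[OF compact_sphere]
    by blast
  have scale: "G h \<bullet> h = (norm h)\<^sup>2 * (G (h /\<^sub>R norm h) \<bullet> (h /\<^sub>R norm h))" if "h \<noteq> 0" for h
    using that by (simp add: linear_scale[OF assms(1)] power2_eq_square field_simps)
  have "(G v \<bullet> v) * (norm h)\<^sup>2 \<le> G h \<bullet> h \<and> G h \<bullet> h \<le> (G u \<bullet> u) * (norm h)\<^sup>2" for h
  proof (cases "h = 0")
    case False
    define y where "y = h /\<^sub>R norm h"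
    have "y \<in> sphere 0 1" using False by (simp add: y_def)
    then have "(norm h)\<^sup>2 * (G v \<bullet> v) \<le> (norm h)\<^sup>2 * (G y \<bullet> y)"
      "(norm h)\<^sup>2 * (G y \<bullet> y) \<le> (norm h)\<^sup>2 * (G u \<bullet> u)"
      using max min by (auto intro: mult_left_mono)
    then show ?thesis unfolding scale[OF False, folded y_def] by (simp add: mult.commute)
  qed (simp add: linear_0[OF assms(1)])
  moreover have "G u \<bullet> u < 0" "G v \<bullet> v < 0"
    using \<open>u \<in> sphere 0 1\<close> \<open>v \<in> sphere 0 1\<close> by (auto intro: neg)
  ultimately show ?thesis using that[of "- (G u \<bullet> u)" "- (G v \<bullet> v)"] by auto
qed

lemma gradient_along_line:
  assumes "\<And>x. (W has_derivative (\<lambda>h. g x \<bullet> h)) (at x)"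
  shows "((\<lambda>t. W (a + t *\<^sub>R h)) has_real_derivative g (a + t *\<^sub>R h) \<bullet> h) (at t)"
proof -
  have "((\<lambda>t. a + t *\<^sub>R h) has_derivative (\<lambda>s. s *\<^sub>R h)) (at t)"
    by (auto intro!: derivative_eq_intros)
  from has_derivative_compose[OF this assms]
  have "((\<lambda>t. W (a + t *\<^sub>R h)) has_derivative (\<lambda>s. g (a + t *\<^sub>R h) \<bullet> (s *\<^sub>R h))) (at t)"
    by (simp add: o_def)
  moreover have "(\<lambda>s. g (a + t *\<^sub>R h) \<bullet> (s *\<^sub>R h)) = (*) (g (a + t *\<^sub>R h) \<bullet> h)"
    by (simp add: fun_eq_iff)
  ultimately show ?thesis by (simp add: has_field_derivative_def)
qed

lemma DERIV_le_linear_imp_le: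
  fixes \<psi> \<psi>' :: "real \<Rightarrow> real"
  assumes "\<And>t. 0 \<le> t \<Longrightarrow> t \<le> 1 \<Longrightarrow> (\<psi> has_real_derivative \<psi>' t) (at t)"
    and "\<And>t. 0 \<le> t \<Longrightarrow> t \<le> 1 \<Longrightarrow> \<psi>' t \<le> k * t"
  shows "\<psi> 1 \<le> \<psi> 0 + k / 2"
proof -
  have "(\<lambda>t. \<psi> t - k / 2 * t\<^sup>2) 1 \<le> (\<lambda>t. \<psi> t - k / 2 * t\<^sup>2) 0"
  proof (rule DERIV_nonpos_imp_nonincreasing[of 0 1])
    fix t :: real assume t: "0 \<le> t" "t \<le> 1"
    have "((\<lambda>t. \<psi> t - k / 2 * t\<^sup>2) has_real_derivative \<psi>' t - k * t) (at t)"
      by (auto intro!: derivative_eq_intros assms(1)[OF t])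
    then show "\<exists>y. ((\<lambda>t. \<psi> t - k / 2 * t\<^sup>2) has_real_derivative y) (at t) \<and> y \<le> 0"
      using assms(2)[OF t] by auto
  qed simp
  then show ?thesis by simp
qed

lemma DERIV_near_linear_imp_bounds:
  fixes \<psi> \<psi>' :: "real \<Rightarrow> real"
  assumes "\<And>t. 0 \<le> t \<Longrightarrow> t \<le> 1 \<Longrightarrow> (\<psi> has_real_derivative \<psi>' t) (at t)"
    and "\<And>t. 0 \<le> t \<Longrightarrow> t \<le> 1 \<Longrightarrow> \<bar>\<psi>' t - k * t\<bar> \<le> e * t"
  shows "\<psi> 0 + (k - e) / 2 \<le> \<psi> 1 \<and> \<psi> 1 \<le> \<psi> 0 + (k + e) / 2"
proof
  have up: "\<psi>' t \<le> (k + e) * t" if "0 \<le> t" "t \<le> 1" for t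
    using assms(2)[OF that] by (simp add: abs_le_iff algebra_simps)
  show "\<psi> 1 \<le> \<psi> 0 + (k + e) / 2" by (rule DERIV_le_linear_imp_le[OF assms(1) up])
  have "- \<psi>' t \<le> (e - k) * t" if "0 \<le> t" "t \<le> 1" for t
    using assms(2)[OF that] by (simp add: abs_le_iff algebra_simps)
  from DERIV_le_linear_imp_le[of "\<lambda>t. - \<psi> t", OF DERIV_minus[OF assms(1)] this]
  show "\<psi> 0 + (k - e) / 2 \<le> \<psi> 1" by (simp add: field_simps)
qed

lemma neg_def_hessian_at_max_quadratic_bounds:
  fixes W :: "'a::euclidean_space \<Rightarrow> real"
  assumes "neg_def_hessian_at W a" and max: "\<And>q. W q \<le> W a"
  shows "\<exists>r>0. \<exists>c>0. \<exists>C>0. \<forall>h. norm h \<le> r \<longrightarrow>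
           c * (norm h)\<^sup>2 \<le> W a - W (a + h) \<and> W a - W (a + h) \<le> C * (norm h)\<^sup>2"
proof -
  obtain g G where W': "\<And>x. (W has_derivative (\<lambda>h. g x \<bullet> h)) (at x)"
    and G: "(g has_derivative G) (at a)" and neg: "\<And>h. h \<noteq> 0 \<Longrightarrow> G h \<bullet> h < 0"
    using assms(1) unfolding neg_def_hessian_at_def by blast
  have "(\<lambda>h. g a \<bullet> h) = (\<lambda>h. 0)"
    using max by (intro has_derivative_local_max[OF W']) auto
  then have ga: "g a = 0" by (metis inner_eq_zero_iff)
  have "linear G" using G by (rule bounded_linear.linear[OF has_derivative_bounded_linear])
  then obtain c B where c: "c > 0" and B: "B > 0"
    and lower_form: "\<And>h. - B * (norm h)\<^sup>2 \<le> G h \<bullet> h" and upper_form: "\<And>h. G h \<bullet> h \<le> - c * (norm h)\<^sup>2"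
    using neg_def_linear_quadratic_bounds neg by blast
  obtain d where d: "d > 0"
    and taylor: "\<And>y. norm (y - a) < d \<Longrightarrow> norm (g y - g a - G (y - a)) \<le> c / 2 * norm (y - a)"
    using G c unfolding has_derivative_at_alt by (meson half_gt_zero)
  have "c / 4 * (norm h)\<^sup>2 \<le> W a - W (a + h) \<and> W a - W (a + h) \<le> (B + c) * (norm h)\<^sup>2"
    if h: "norm h \<le> d / 2" for h
  proof -
    define \<psi>' where "\<psi>' t = g (a + t *\<^sub>R h) \<bullet> h" for t
    have "((\<lambda>t. W (a + t *\<^sub>R h)) has_real_derivative \<psi>' t) (at t)" for t
      unfolding \<psi>'_def by (rule gradient_along_line[OF W'])
    moreover have "\<bar>\<psi>' t - (G h \<bullet> h) * t\<bar> \<le> (c / 2 * (norm h)\<^sup>2) * t" if t: "0 \<le> t" "t \<le> 1" for t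
    proof -
      have "norm (t *\<^sub>R h) \<le> norm h" using t by (simp add: mult_left_le_one_le)
      then have "norm (t *\<^sub>R h) < d" using h d by linarith
      then have "norm (g (a + t *\<^sub>R h) - G (t *\<^sub>R h)) \<le> c / 2 * (t * norm h)"
        using taylor[of "a + t *\<^sub>R h"] ga t by simp
      then have "\<bar>(g (a + t *\<^sub>R h) - G (t *\<^sub>R h)) \<bullet> h\<bar> \<le> c / 2 * (t * norm h) * norm h"
        by (rule order.trans[OF Cauchy_Schwarz_ineq2 mult_right_mono]) simp
      then show ?thesis
        by (simp add: \<psi>'_def inner_diff_left linear_scale[OF \<open>linear G\<close>] power2_eq_square
            algebra_simps)
    qed
    ultimately have "W a + (G h \<bullet> h - c / 2 * (norm h)\<^sup>2) / 2 \<le> W (a + h)"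
        "W (a + h) \<le> W a + (G h \<bullet> h + c / 2 * (norm h)\<^sup>2) / 2"
      using DERIV_near_linear_imp_bounds[of "\<lambda>t. W (a + t *\<^sub>R h)" \<psi>' "G h \<bullet> h"] by simp_all
    moreover have "0 \<le> c * (norm h)\<^sup>2" "0 \<le> B * (norm h)\<^sup>2" using c B by simp_all
    ultimately show ?thesis
      using upper_form[of h] lower_form[of h]
      unfolding distrib_right times_divide_eq_left mult_minus_left
      by (intro conjI) (simp_all add: field_simps)
  qed
  moreover have "d / 2 > 0" "c / 4 > 0" "B + c > 0" using c B d(1) by auto
  ultimately show ?thesis by blast
qed

lemma torus_eq_refl [simp]: "torus_eq x x"
  unfolding torus_eq_def by (auto intro: exI[of _ 0])

lemma torus_eq_sym:
  assumes "torus_eq x y" shows "torus_eq y x"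
  unfolding torus_eq_def
proof
  fix i
  obtain k :: int where "x $ i - y $ i = 2 * pi * k" using assms unfolding torus_eq_def by blast
  then have "y $ i - x $ i = 2 * pi * of_int (- k)" by simp
  then show "\<exists>k::int. y $ i - x $ i = 2 * pi * of_int k" by blast
qed

lemma torus_eq_trans:
  assumes "torus_eq x y" "torus_eq y z" shows "torus_eq x z"
  unfolding torus_eq_def
proof
  fix i
  obtain k1 k2 :: int where "x $ i - y $ i = 2 * pi * k1" "y $ i - z $ i = 2 * pi * k2"
    using assms unfolding torus_eq_def by blast
  then have "x $ i - z $ i = 2 * pi * of_int (k1 + k2)" by (simp add: algebra_simps)
  then show "\<exists>k::int. x $ i - z $ i = 2 * pi * of_int k" by blast
qed

lemma torus_eq_add_right: "torus_eq x y \<Longrightarrow> torus_eq (x + h) (y + h)"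
  unfolding torus_eq_def by simp

lemma torus_eq_translate:
  assumes "torus_eq b a" shows "torus_eq q (a + (q - b))"
  using torus_eq_add_right[OF assms, of "q - b"] by simp

lemma T3_periodicD: "T3_periodic f \<Longrightarrow> torus_eq x y \<Longrightarrow> f x = f y"
  unfolding T3_periodic_def by blast

lemma T3_periodic2_imp_T3_periodic: "T3_periodic2 w \<Longrightarrow> T3_periodic (w p)"
  unfolding T3_periodic2_def T3_periodic_def by (blast intro: torus_eq_refl)

lemma T3dom_representative: "\<exists>x'\<in>T3dom. torus_eq x' x"
proof -
  define k where "k i = \<lfloor>(pi - x $ i) / (2 * pi)\<rfloor>" for i
  define x' :: "real^3" where "x' = (\<chi> i. x $ i + 2 * pi * of_int (k i))"
  have "- pi < x' $ i \<and> x' $ i \<le> pi" for i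
  proof -
    have "of_int (k i) \<le> (pi - x $ i) / (2 * pi)" "(pi - x $ i) / (2 * pi) < of_int (k i) + 1"
      unfolding k_def by linarith+
    then show ?thesis using pi_gt_zero by (simp add: x'_def field_simps)
  qed
  then have "x' \<in> T3dom" unfolding T3dom_def by auto
  moreover have "torus_eq x' x" unfolding torus_eq_def x'_def by auto
  ultimately show ?thesis by blast
qed

lemma T3dom_torus_eq_imp_eq:
  assumes "x \<in> T3dom" "y \<in> T3dom" "torus_eq x y" shows "x = y"
proof -
  have "x $ i = y $ i" for i
  proof -
    obtain k :: int where k: "x $ i - y $ i = 2 * pi * of_int k"
      using assms(3) unfolding torus_eq_def by blast
    have "- pi < x $ i" "x $ i \<le> pi" "- pi < y $ i" "y $ i \<le> pi"
      using assms(1,2) unfolding T3dom_def by auto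
    then have "\<bar>x $ i - y $ i\<bar> < 2 * pi" by linarith
    then have "\<bar>of_int k\<bar> * (2 * pi) < 1 * (2 * pi)" using k by (simp add: abs_mult)
    then have "k = 0" using pi_gt_zero by (simp only: mult_less_cancel_right) linarith
    then show ?thesis using k by simp
  qed
  then show ?thesis by (simp add: vec_eq_iff)
qed

lemma T3dom_subset_cbox: "T3dom \<subseteq> cbox (\<chi> i. - pi) (\<chi> i. pi)"
  unfolding T3dom_def by (auto simp: mem_box_cart less_imp_le)

lemma T3dom_borel: "T3dom \<in> sets borel"
proof -
  have "T3dom = (\<Inter>i. {x::real^3. - pi < x $ i} \<inter> {x. x $ i \<le> pi})" unfolding T3dom_def by auto
  also have "\<dots> \<in> sets borel"
    by (intro sets.finite_INT)
      (auto intro!: borel_open borel_closed open_Collect_less closed_Collect_le continuous_intros)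
  finally show ?thesis .
qed

lemma T3dom_lebesgue [simp]: "T3dom \<in> sets lebesgue"
  using T3dom_borel by (simp add: sets_completionI_sets)

lemma finite_measure_T3meas: "finite_measure T3meas"
proof -
  have "emeasure lebesgue T3dom \<le> emeasure lborel (cbox (\<chi> i. - pi) (\<chi> i. pi) :: (real^3) set)"
    using emeasure_mono[OF T3dom_subset_cbox, of lebesgue] by (simp add: emeasure_completion)
  then have "emeasure lebesgue T3dom < \<infinity>"
    using emeasure_lborel_cbox_finite order.strict_trans1 by blast
  then show ?thesis by (intro finite_measureI) (simp add: emeasure_restrict_space)
qed

lemma continuous_on_imp_T3meas_measurable:
  fixes f :: "real^3 \<Rightarrow> real"
  assumes "continuous_on UNIV f" shows "f \<in> borel_measurable T3meas"
  using assms by (intro continuous_imp_measurable_on_sets_lebesgue T3dom_lebesgue)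
    (auto intro: continuous_on_subset)

lemma T3dom_cube:
  assumes x: "x \<in> T3dom" and e: "0 < e" "e \<le> pi"
  obtains l where "cbox l (l + (\<chi> i. e)) \<subseteq> T3dom"
    "\<And>y. y \<in> cbox l (l + (\<chi> i. e)) \<Longrightarrow> norm (y - x) \<le> 3 * e"
    "emeasure lebesgue (cbox l (l + (\<chi> i. e))) = ennreal (e ^ 3)"
proof
  define l :: "real^3" where "l = (\<chi> i. if x $ i > 0 then x $ i - e else x $ i)"
  let ?Q = "cbox l (l + (\<chi> i. e))"
  have Q: "y \<in> ?Q \<longleftrightarrow> (\<forall>i. l $ i \<le> y $ i \<and> y $ i \<le> l $ i + e)" for y
    by (simp add: mem_box_cart)
  have x_i: "- pi < x $ i \<and> x $ i \<le> pi" for i using x unfolding T3dom_def by blast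
  show "?Q \<subseteq> T3dom"
  proof
    fix y assume "y \<in> ?Q"
    then have y_i: "l $ i \<le> y $ i \<and> y $ i \<le> l $ i + e" for i using Q by blast
    have "- pi < y $ i \<and> y $ i \<le> pi" for i
      using y_i[of i] x_i[of i] e by (cases "x $ i > 0") (auto simp: l_def)
    then show "y \<in> T3dom" unfolding T3dom_def by blast
  qed
  show "norm (y - x) \<le> 3 * e" if "y \<in> ?Q" for y
  proof -
    have y_i: "l $ i \<le> y $ i \<and> y $ i \<le> l $ i + e" for i using that Q by blast
    have "\<bar>(y - x) $ i\<bar> \<le> e" for i
      using y_i[of i] e by (cases "x $ i > 0") (auto simp: l_def abs_le_iff)
    then have "(\<Sum>i\<in>UNIV. \<bar>(y - x) $ i\<bar>) \<le> (\<Sum>i\<in>(UNIV::3 set). e)" by (intro sum_mono) auto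
    then show ?thesis using norm_le_l1_cart[of "y - x"] by simp
  qed
  have e_b: "(\<chi> i. e) \<bullet> b = e" if "b \<in> Basis" for b :: "real^3"
    using that by (auto simp: Basis_vec_def inner_axis)
  then have "(\<Prod>b\<in>Basis. ((l + (\<chi> i. e)) - l) \<bullet> b) = (\<Prod>b\<in>(Basis::(real^3) set). e)"
    by (intro prod.cong) auto
  then show "emeasure lebesgue ?Q = ennreal (e ^ 3)"
    using e e_b by (auto simp: emeasure_completion emeasure_lborel_cbox_eq inner_add_left)
qed

lemma finite_torus_translates: "finite {b. torus_eq b a \<and> norm b \<le> R}"
proof -
  define N :: int where "N = \<lceil>(R + norm a) / (2 * pi)\<rceil>"
  define K where "K = Pi\<^sub>E UNIV (\<lambda>_::3. {-N..N})"
  have "{b. torus_eq b a \<and> norm b \<le> R} \<subseteq> (\<lambda>k. a + (\<chi> i. 2 * pi * of_int (k i))) ` K"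
  proof
    fix b assume b: "b \<in> {b. torus_eq b a \<and> norm b \<le> R}"
    then have "\<forall>i. \<exists>k::int. b $ i - a $ i = 2 * pi * of_int k" unfolding torus_eq_def by simp
    then obtain k where k: "\<And>i. b $ i - a $ i = 2 * pi * of_int (k i)" by (metis choice)
    have k_bound: "\<bar>k i\<bar> \<le> N" for i
    proof -
      have "2 * pi * \<bar>of_int (k i)\<bar> = \<bar>b $ i - a $ i\<bar>"
        using k[of i] pi_gt_zero by (simp add: abs_mult)
      also have "\<dots> \<le> norm b + norm a"
        using abs_triangle_ineq4[of "b $ i" "a $ i"] component_le_norm_cart[of b i]
          component_le_norm_cart[of a i] by linarith
      also have "\<dots> \<le> R + norm a" using b by simp
      finally have "\<bar>of_int (k i)\<bar> \<le> (R + norm a) / (2 * pi)"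
        using pi_gt_zero by (simp add: le_divide_eq mult.commute)
      then show ?thesis unfolding N_def by linarith
    qed
    have "k i \<in> {-N..N}" for i using k_bound[of i] by (simp add: abs_le_iff)
    then have "k \<in> K" by (simp add: K_def PiE_UNIV_domain)
    moreover have "b = a + (\<chi> i. 2 * pi * of_int (k i))" using k by (simp add: vec_eq_iff algebra_simps)
    ultimately show "b \<in> (\<lambda>k. a + (\<chi> i. 2 * pi * of_int (k i))) ` K" by blast
  qed
  moreover have "finite K" unfolding K_def by (intro finite_PiE) auto
  ultimately show ?thesis using finite_subset by blast
qed

lemma dyadic_interval:
  fixes y R :: real assumes "0 < y" "y \<le> R"
  obtains m :: nat where "R / 2 ^ Suc m < y" "y \<le> R / 2 ^ m"
proof -
  obtain n :: nat where "R / y < 2 ^ n" using real_arch_pow[of 2 "R / y"] by auto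
  define n0 where "n0 = (LEAST n::nat. R / y < 2 ^ n)"
  have n0: "R / y < 2 ^ n0" unfolding n0_def by (rule LeastI) fact
  moreover have "1 \<le> R / y" using assms by simp
  ultimately have "n0 \<noteq> 0" by (metis not_less power_0)
  then obtain m where m: "n0 = Suc m" using not0_implies_Suc by blast
  have "\<not> R / y < 2 ^ m"
  proof
    assume "R / y < 2 ^ m"
    then have "n0 \<le> m" unfolding n0_def by (rule Least_le)
    then show False using m by simp
  qed
  then have "y \<le> R / 2 ^ m" using assms by (simp add: field_simps)
  moreover have "R / 2 ^ Suc m < y" using n0 m assms by (simp add: field_simps)
  ultimately show ?thesis using that by blast
qed

lemma emeasure_cball_le_cube:
  fixes b :: "real^3" assumes "0 \<le> \<rho>"
  shows "emeasure lborel (cball b \<rho>) \<le> ennreal ((2 * \<rho>) ^ 3)"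
proof -
  have "x \<in> cbox (b - (\<chi> i. \<rho>)) (b + (\<chi> i. \<rho>))" if "x \<in> cball b \<rho>" for x
  proof -
    have "\<bar>x $ i - b $ i\<bar> \<le> \<rho>" for i
      using component_le_norm_cart[of "x - b" i] that by (simp add: dist_norm norm_minus_commute)
    then have "b $ i - \<rho> \<le> x $ i \<and> x $ i \<le> b $ i + \<rho>" for i
      by (simp add: abs_le_iff) (smt (verit))
    then show ?thesis by (simp add: mem_box_cart)
  qed
  then have "emeasure lborel (cball b \<rho>) \<le> emeasure lborel (cbox (b - (\<chi> i. \<rho>)) (b + (\<chi> i. \<rho>)))"
    by (intro emeasure_mono subsetI) auto
  also have "\<dots> = ennreal ((2 * \<rho>) ^ 3)"
  proof -
    have const: "(\<chi> i. r) \<bullet> c = r" if "c \<in> Basis" for c :: "real^3" and r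
      using that by (auto simp: Basis_vec_def inner_axis)
    have "(b + (\<chi> i. \<rho>)) - (b - (\<chi> i. \<rho>)) = (\<chi> i. 2 * \<rho>)" by (simp add: vec_eq_iff)
    then show ?thesis using assms const by (auto simp: emeasure_lborel_cbox_eq inner_diff_left inner_add_left)
  qed
  finally show ?thesis .
qed

lemma inverse_square_le_dyadic_sum:
  fixes b x :: "'a::real_normed_vector" assumes R: "R > 0"
  shows "ennreal (indicator (cball b R) x * (1 / (norm (x - b))\<^sup>2))
           \<le> (\<Sum>m. ennreal (4 ^ Suc m / R\<^sup>2) * indicator (cball b (R / 2 ^ m)) x)"
proof (cases "x \<in> cball b R \<and> x \<noteq> b")
  case True
  define F where "F = (\<lambda>m. ennreal (4 ^ Suc m / R\<^sup>2) * indicator (cball b (R / 2 ^ m)) x)"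
  define y where "y = norm (x - b)"
  have y: "0 < y" "y \<le> R" using True by (auto simp: y_def dist_norm norm_minus_commute)
  then obtain m where m: "R / 2 ^ Suc m < y" "y \<le> R / 2 ^ m" by (rule dyadic_interval)
  have "1 / y\<^sup>2 < 1 / (R / 2 ^ Suc m)\<^sup>2"
    using m(1) R y by (intro divide_strict_left_mono power_strict_mono) auto
  also have "\<dots> = 4 ^ Suc m / R\<^sup>2"
    using R by (simp add: power_divide field_simps power2_eq_square flip: power_mult_distrib)
  finally have "ennreal (1 / y\<^sup>2) \<le> F m"
    using m(2) by (simp add: F_def y_def dist_norm norm_minus_commute ennreal_leI)
  also have "\<dots> \<le> suminf F"
    using sum_le_suminf[OF summableI, of "{m}" F] by simp
  finally show ?thesis using True by (simp add: y_def F_def)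
qed (auto simp: indicator_def)

text \<open>The dyadic shell R/2^(m+1) < |x - b| \<le> R/2^m carries the weight 4^(m+1)/R^2 but has volume
  O(R^3/8^m), so in dimension 3 the bound above has a convergent integral.\<close>
lemma integrable_inverse_square_dist_cball:
  fixes b :: "real^3" assumes R: "R > 0"
  shows "integrable lborel (\<lambda>x. indicator (cball b R) x * (1 / (norm (x - b))\<^sup>2) :: real)"
proof (rule integrableI_bounded)
  have [measurable]: "(\<lambda>x::real^3. norm (x - b)) \<in> borel_measurable borel"
    by (intro borel_measurable_continuous_onI continuous_intros)
  have [measurable]: "cball b r \<in> sets borel" for r by (simp add: borel_closed)
  show "(\<lambda>x. indicator (cball b R) x * (1 / (norm (x - b))\<^sup>2) :: real) \<in> borel_measurable lborel"
    by measurable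
  define \<rho> where "\<rho> m = R / 2 ^ m" for m :: nat
  define c where "c m = 4 ^ Suc m / R\<^sup>2" for m :: nat
  have "(\<integral>\<^sup>+x. ennreal (norm (indicator (cball b R) x * (1 / (norm (x - b))\<^sup>2) :: real)) \<partial>lborel)
      \<le> (\<integral>\<^sup>+x. (\<Sum>m. ennreal (c m) * indicator (cball b (\<rho> m)) x) \<partial>lborel)"
    using inverse_square_le_dyadic_sum[OF R] by (intro nn_integral_mono) (simp add: c_def \<rho>_def)
  also have "\<dots> = (\<Sum>m. ennreal (c m) * emeasure lborel (cball b (\<rho> m)))"
    by (subst nn_integral_suminf) (auto simp: nn_integral_cmult_indicator)
  also have "\<dots> \<le> (\<Sum>m. ennreal (32 * R * (1/2) ^ m))"
  proof (intro suminf_le)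
    fix m
    have "ennreal (c m) * emeasure lborel (cball b (\<rho> m)) \<le> ennreal (c m) * ennreal ((2 * \<rho> m) ^ 3)"
      using R by (intro mult_left_mono emeasure_cball_le_cube) (auto simp: \<rho>_def)
    also have "\<dots> = ennreal (c m * (2 * \<rho> m) ^ 3)"
      using R by (subst ennreal_mult) (auto simp: c_def \<rho>_def)
    also have "c m * (2 * \<rho> m) ^ 3 = 32 * R / 2 ^ m"
      using R by (simp add: c_def \<rho>_def power_divide power_mult_distrib field_simps
          power3_eq_cube power2_eq_square flip: power_mult_distrib)
    finally show "ennreal (c m) * emeasure lborel (cball b (\<rho> m)) \<le> ennreal (32 * R * (1/2) ^ m)"
      by (simp add: power_one_over)
  qed auto
  also have "\<dots> = ennreal (\<Sum>m. 32 * R * (1/2) ^ m)"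
    using R by (intro suminf_ennreal2) (auto intro!: summable_mult summable_geometric)
  also have "\<dots> < \<infinity>" by simp
  finally show "(\<integral>\<^sup>+x. ennreal (norm (indicator (cball b R) x * (1 / (norm (x - b))\<^sup>2) :: real))
      \<partial>lborel) < \<infinity>" .
qed

lemma integrable_T3meas_inverse_square_dist:
  "integrable T3meas (\<lambda>q. 1 / (norm (q - b))\<^sup>2 :: real)"
proof -
  have "bounded T3dom" using T3dom_subset_cbox bounded_cbox bounded_subset by blast
  then obtain R where R: "R > 0" "T3dom \<subseteq> ball b R" using bounded_subset_ballD by blast
  have [measurable]: "(\<lambda>x::real^3. norm (x - b)) \<in> borel_measurable borel"
    by (intro borel_measurable_continuous_onI continuous_intros)
  have [measurable]: "T3dom \<in> sets borel" "cball b R \<in> sets borel"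
    by (simp_all add: T3dom_borel borel_closed)
  have "integrable lebesgue (\<lambda>x. indicator (cball b R) x * (1 / (norm (x - b))\<^sup>2) :: real)"
    using integrable_inverse_square_dist_cball[OF R(1)] by (subst integrable_completion) measurable
  then have "integrable lebesgue (\<lambda>x. indicator T3dom x *\<^sub>R (1 / (norm (x - b))\<^sup>2) :: real)"
  proof (rule Bochner_Integration.integrable_bound)
    show "(\<lambda>x. indicator T3dom x *\<^sub>R (1 / (norm (x - b))\<^sup>2) :: real) \<in> borel_measurable lebesgue"
      by (intro measurable_completion) measurable
    show "AE x in lebesgue. norm (indicator T3dom x *\<^sub>R (1 / (norm (x - b))\<^sup>2) :: real)
        \<le> norm (indicator (cball b R) x * (1 / (norm (x - b))\<^sup>2) :: real)"
      using R(2) ball_subset_cball by (intro AE_I2) (auto simp: indicator_def)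
  qed
  then show ?thesis by (subst integrable_restrict_space) auto
qed

lemma not_integrable_T3meas_inverse_fourth_power:
  fixes G :: "real^3 \<Rightarrow> real"
  assumes x: "x \<in> T3dom" and "\<rho> > 0" "\<kappa> > 0" and nonneg: "\<And>y. 0 \<le> G y"
    and lower: "\<And>y. y \<noteq> x \<Longrightarrow> norm (y - x) \<le> \<rho> \<Longrightarrow> \<kappa> / (norm (y - x)) ^ 4 \<le> G y"
  shows "\<not> integrable T3meas G"
proof
  assume int: "integrable T3meas G"
  define T where "T = integral\<^sup>L T3meas G"
  define e where "e = min (min pi (\<rho> / 3)) (\<kappa> / (81 * (\<bar>T\<bar> + 1)))"
  have "e \<le> \<kappa> / (81 * (\<bar>T\<bar> + 1))" by (simp add: e_def)
  then have "e * (81 * (\<bar>T\<bar> + 1)) \<le> \<kappa>" by (simp add: pos_le_divide_eq)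
  moreover have "0 < e" "e \<le> pi" "3 * e \<le> \<rho>" using assms pi_gt_zero by (auto simp: e_def)
  ultimately have e: "0 < e" "e \<le> pi" "3 * e \<le> \<rho>" "81 * (\<bar>T\<bar> + 1) * e \<le> \<kappa>"
    by (simp_all add: algebra_simps)
  obtain l where Q: "cbox l (l + (\<chi> i. e)) \<subseteq> T3dom"
    "\<And>y. y \<in> cbox l (l + (\<chi> i. e)) \<Longrightarrow> norm (y - x) \<le> 3 * e"
    "emeasure lebesgue (cbox l (l + (\<chi> i. e))) = ennreal (e ^ 3)"
    using T3dom_cube[OF x e(1,2)] by metis
  define A where "A = cbox l (l + (\<chi> i. e)) - {x}"
  have "A \<subseteq> T3dom" using Q(1) by (auto simp: A_def)
  have "measure T3meas A = e ^ 3"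
  proof -
    have "{x} \<in> null_sets lebesgue"
      by (intro null_sets_completionI countable_imp_null_set_lborel) simp
    then have "measure lebesgue A = measure lebesgue (cbox l (l + (\<chi> i. e)))"
      unfolding A_def by (intro measure_Diff_null_set) (auto simp: sets_completionI_sets)
    moreover have "measure T3meas A = measure lebesgue A"
      using \<open>A \<subseteq> T3dom\<close> by (intro measure_restrict_space) auto
    ultimately show ?thesis using Q(3) e(1) by (simp add: measure_def)
  qed
  have "\<kappa> / (81 * e ^ 4) * indicator A y \<le> G y" for y
  proof (cases "y \<in> A")
    case True
    then have y: "y \<noteq> x" "norm (y - x) \<le> 3 * e" using Q(2) by (auto simp: A_def)
    then have "\<kappa> / (81 * e ^ 4) \<le> \<kappa> / (norm (y - x)) ^ 4"
      using \<open>\<kappa> > 0\<close> e(1) power_mono[OF y(2), of 4]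
      by (intro divide_left_mono) (auto simp: power_mult_distrib)
    also have "\<dots> \<le> G y" using lower y e(3) by simp
    finally show ?thesis using True by simp
  qed (simp add: nonneg)
  then have "integral\<^sup>L T3meas (\<lambda>y. \<kappa> / (81 * e ^ 4) * indicator A y) \<le> T"
    unfolding T_def using int nonneg by (intro integral_mono') auto
  moreover have "integral\<^sup>L T3meas (\<lambda>y. \<kappa> / (81 * e ^ 4) * indicator A y) = \<kappa> / (81 * e)"
    using \<open>A \<subseteq> T3dom\<close> \<open>measure T3meas A = e ^ 3\<close> e(1)
    by (simp add: Int_absorb2 power_eq_if field_simps)
  moreover have "\<bar>T\<bar> + 1 \<le> \<kappa> / (81 * e)" using e by (simp add: field_simps)
  ultimately show False by linarith
qed

lemma not_AE_T3meas_zero: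
  fixes \<phi> :: "real^3 \<Rightarrow> real"
  assumes "continuous_on UNIV \<phi>" and "T3_periodic \<phi>" and "\<phi> x0 \<noteq> 0"
  shows "\<not> (AE q in T3meas. \<phi> q = 0)"
proof
  assume "AE q in T3meas. \<phi> q = 0"
  then have "AE q in lebesgue. q \<in> T3dom \<longrightarrow> \<phi> q = 0"
    by (subst (asm) AE_restrict_space_iff) auto
  then obtain N where N: "{q. \<not> (q \<in> T3dom \<longrightarrow> \<phi> q = 0)} \<subseteq> N" "emeasure lebesgue N = 0"
    "N \<in> sets lebesgue"
    by (auto elim!: AE_E)
  obtain x where x: "x \<in> T3dom" "torus_eq x x0" using T3dom_representative by blast
  then have "\<phi> x \<noteq> 0" using assms(3) T3_periodicD[OF assms(2)] by metis
  then obtain d where "d > 0" and near: "\<And>y. dist y x < d \<Longrightarrow> dist (\<phi> y) (\<phi> x) < \<bar>\<phi> x\<bar>"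
    using assms(1) unfolding continuous_on_eq_continuous_at[OF open_UNIV] continuous_at_eps_delta
    by (metis UNIV_I zero_less_abs_iff)
  define e where "e = min pi (d / 6)"
  have e: "0 < e" "e \<le> pi" "3 * e < d" using \<open>d > 0\<close> pi_gt_zero by (auto simp: e_def)
  obtain l where Q: "cbox l (l + (\<chi> i. e)) \<subseteq> T3dom"
    "\<And>y. y \<in> cbox l (l + (\<chi> i. e)) \<Longrightarrow> norm (y - x) \<le> 3 * e"
    "emeasure lebesgue (cbox l (l + (\<chi> i. e))) = ennreal (e ^ 3)"
    using T3dom_cube[OF x(1) e(1,2)] by metis
  have "\<phi> y \<noteq> 0" if "y \<in> cbox l (l + (\<chi> i. e))" for y
    using near[of y] Q(2)[OF that] e(3) by (auto simp: dist_norm)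
  then have "cbox l (l + (\<chi> i. e)) \<subseteq> N" using N(1) Q(1) by auto
  then have "ennreal (e ^ 3) \<le> 0"
    using emeasure_mono[OF _ N(3)] Q(3) N(2) by metis
  then show False using e(1) by simp
qed

lemma integral_pairing_AE_profile:
  fixes W \<phi> :: "'a \<Rightarrow> real" and f :: "'a \<Rightarrow> complex"
  assumes [measurable]: "W \<in> borel_measurable M" "\<phi> \<in> borel_measurable M" "f \<in> borel_measurable M"
    and "AE q in M. f q = C * of_real (\<mu> * \<phi> q / (E - W q))"
  shows "(\<integral>t. of_real (\<phi> t) * f t \<partial>M) = C * of_real (\<mu> * (\<integral>s. (\<phi> s)\<^sup>2 / (E - W s) \<partial>M))"
proof -
  have "(\<integral>t. of_real (\<phi> t) * f t \<partial>M) = (\<integral>t. C * of_real (\<mu> * ((\<phi> t)\<^sup>2 / (E - W t))) \<partial>M)"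
    using assms(4) by (intro integral_cong_AE) (auto simp: power2_eq_square elim!: eventually_mono)
  then show ?thesis by (simp only: integral_mult_right_zero integral_complex_of_real)
qed

lemma rank_one_eigenfunction_iff:
  fixes M :: "'a measure" and W \<phi> :: "'a \<Rightarrow> real" and f :: "'a \<Rightarrow> complex"
  assumes [measurable]: "W \<in> borel_measurable M" "\<phi> \<in> borel_measurable M" "f \<in> borel_measurable M"
    and below: "AE q in M. W q < E" and \<phi>_nonzero: "\<not> (AE q in M. \<phi> q = 0)" and "\<mu> \<noteq> 0"
  shows "(\<not> (AE q in M. f q = 0) \<and>
          (AE q in M. of_real (W q) * f q + of_real (\<mu> * \<phi> q) * (\<integral>t. of_real (\<phi> t) * f t \<partial>M)
                        = of_real E * f q))
     \<longleftrightarrow> \<mu> * (\<integral>s. (\<phi> s)\<^sup>2 / (E - W s) \<partial>M) = 1 \<and>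
          (\<exists>C. C \<noteq> 0 \<and> (AE q in M. f q = C * of_real (\<mu> * \<phi> q / (E - W q))))"
    (is "?eigen \<longleftrightarrow> ?I = 1 \<and> (\<exists>C. C \<noteq> 0 \<and> (AE q in M. f q = C * ?g q))")
proof -
  note pairing = integral_pairing_AE_profile[OF assms(1-3)]
  have eq_iff: "of_real (W q) * y + of_real (\<mu> * \<phi> q) * C = of_real E * y \<longleftrightarrow> y = C * ?g q"
    if "W q < E" for q y C
  proof -
    have "(of_real (E - W q) :: complex) \<noteq> 0" using that by simp
    then show ?thesis by (auto simp: field_simps)
  qed
  show ?thesis
  proof
    assume ?eigen
    define C where "C = (\<integral>t. of_real (\<phi> t) * f t \<partial>M)"
    have f_eq: "AE q in M. f q = C * ?g q"
      using conjunct2[OF \<open>?eigen\<close>] below by eventually_elim (use eq_iff in \<open>simp add: C_def\<close>)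
    then have "C \<noteq> 0" using \<open>?eigen\<close> by (auto elim: eventually_mono)
    moreover have "C = C * of_real ?I" using pairing[OF f_eq] by (simp add: C_def)
    ultimately have "?I = 1" by (metis mult_cancel_left1 of_real_eq_1_iff)
    then show "?I = 1 \<and> (\<exists>C. C \<noteq> 0 \<and> (AE q in M. f q = C * ?g q))" using \<open>C \<noteq> 0\<close> f_eq by blast
  next
    assume "?I = 1 \<and> (\<exists>C. C \<noteq> 0 \<and> (AE q in M. f q = C * ?g q))"
    then obtain C where "?I = 1" "C \<noteq> 0" and f_eq: "AE q in M. f q = C * ?g q" by blast
    have integral_C: "(\<integral>t. of_real (\<phi> t) * f t \<partial>M) = C"
      using pairing[OF f_eq] \<open>?I = 1\<close> by simp
    from f_eq below
    have "AE q in M. of_real (W q) * f q + of_real (\<mu> * \<phi> q) * (\<integral>t. of_real (\<phi> t) * f t \<partial>M)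
                       = of_real E * f q"
      by eventually_elim (simp only: integral_C eq_iff)
    moreover have "\<not> (AE q in M. f q = 0)"
    proof
      assume "AE q in M. f q = 0"
      with f_eq below have "AE q in M. \<phi> q = 0"
        by eventually_elim (use \<open>C \<noteq> 0\<close> \<open>\<mu> \<noteq> 0\<close> in auto)
      with \<phi>_nonzero show False ..
    qed
    ultimately show ?eigen by blast
  qed
qed

lemma L2_T3_AE_cmult_iff:
  assumes [measurable]: "f \<in> borel_measurable T3meas" "g \<in> borel_measurable T3meas"
    and "C \<noteq> 0" and "AE q in T3meas. f q = C * g q"
  shows "f \<in> L2_T3 \<longleftrightarrow> g \<in> L2_T3"
proof -
  have "AE q in T3meas. (cmod (f q))\<^sup>2 = (cmod C)\<^sup>2 * (cmod (g q))\<^sup>2"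
    using assms(4) by eventually_elim (simp add: norm_mult power_mult_distrib)
  then have "integrable T3meas (\<lambda>q. (cmod (f q))\<^sup>2) \<longleftrightarrow>
      integrable T3meas (\<lambda>q. (cmod C)\<^sup>2 * (cmod (g q))\<^sup>2)"
    by (intro integrable_cong_AE) measurable
  then show ?thesis using assms(3) unfolding L2_T3_def by simp
qed

locale periodic_peak =
  fixes W :: "real^3 \<Rightarrow> real" and a :: "real^3"
  assumes continuous: "continuous_on UNIV W"
    and periodic: "T3_periodic W"
    and max: "\<And>q. W q \<le> W a"
    and max_unique: "\<And>q. W q = W a \<Longrightarrow> torus_eq q a"
    and quadratic: "\<exists>r>0. \<exists>c>0. \<exists>C>0. \<forall>h. norm h \<le> r \<longrightarrow>
           c * (norm h)\<^sup>2 \<le> W a - W (a + h) \<and> W a - W (a + h) \<le> C * (norm h)\<^sup>2"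
begin

lemma W_measurable [measurable]: "W \<in> borel_measurable T3meas"
  by (rule continuous_on_imp_T3meas_measurable[OF continuous])

lemma AE_below_max: "AE q in T3meas. W q < W a"
proof -
  obtain a' where a': "a' \<in> T3dom" "torus_eq a' a" using T3dom_representative by blast
  have "AE x in lebesgue. x \<noteq> a'" by (rule AE_completion[OF AE_lborel_singleton])
  then have "AE x in lebesgue. x \<in> T3dom \<longrightarrow> W x < W a"
  proof (rule eventually_mono, intro impI)
    fix x assume "x \<noteq> a'" "x \<in> T3dom"
    then have "\<not> torus_eq x a"
      using a' T3dom_torus_eq_imp_eq torus_eq_sym torus_eq_trans by blast
    then show "W x < W a" using max[of x] max_unique[of x] by force
  qed
  then show ?thesis by (subst AE_restrict_space_iff) auto
qed

lemma near_max_imp_near_translate: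
  assumes "r > 0"
  obtains m where "m > 0" "\<And>q. W a - m < W q \<Longrightarrow> \<exists>b. torus_eq b a \<and> norm (q - b) < r"
proof -
  \<comment> \<open>On the compact set of points of the cube that are r-far from every translate of a,
    W stays below W a by a fixed gap.\<close>
  define S where "S = cbox (\<chi> i. - pi) (\<chi> i. pi) \<inter> (\<Inter>b\<in>{b. torus_eq b a}. {q. r \<le> dist q b})"
  have "compact S" unfolding S_def
    by (intro compact_Int_closed compact_cbox closed_INT ballI closed_Collect_le continuous_on_const
        continuous_on_dist continuous_on_id)
  obtain m where m: "m > 0" and gap: "\<And>q. q \<in> S \<Longrightarrow> W q \<le> W a - m"
  proof (cases "S = {}")
    case False
    then obtain q_s where "q_s \<in> S" and q_s_max: "\<And>y. y \<in> S \<Longrightarrow> W y \<le> W q_s"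
      using continuous_attains_sup[OF \<open>compact S\<close> False continuous_on_subset[OF continuous]]
      by blast
    then have "\<not> torus_eq q_s a" using assms unfolding S_def by fastforce
    then have "W q_s < W a" using max[of q_s] max_unique[of q_s] by force
    then show ?thesis using q_s_max that[of "W a - W q_s"] by auto
  qed (use that[of 1] in auto)
  show ?thesis
  proof (rule that[OF m])
    fix q assume q: "W a - m < W q"
    obtain q' where q': "q' \<in> T3dom" "torus_eq q' q" using T3dom_representative by blast
    then have "W a - m < W q'" using q T3_periodicD[OF periodic] by metis
    then have "q' \<notin> S" using gap by force
    then obtain b where b: "torus_eq b a" "norm (q' - b) < r"
      using q'(1) T3dom_subset_cbox unfolding S_def by (auto simp: dist_norm)
    have "torus_eq (b + (q - q')) a"
      using torus_eq_add_right[OF torus_eq_sym[OF q'(2)], of "b - q'"] b(1) torus_eq_trans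
      by (simp add: algebra_simps)
    moreover have "norm (q - (b + (q - q'))) < r" using b(2) by simp
    ultimately show "\<exists>b. torus_eq b a \<and> norm (q - b) < r" by blast
  qed
qed

lemma profile_sq_lower_bound:
  assumes "isCont \<phi> a" and "\<phi> a \<noteq> 0"
  obtains \<rho> \<kappa> where "\<rho> > 0" "\<kappa> > 0"
    "\<And>h. norm h \<le> \<rho> \<Longrightarrow> \<kappa> / (norm h) ^ 4 \<le> (\<phi> (a + h))\<^sup>2 / (W a - W (a + h))\<^sup>2"
proof -
  obtain r c C where "r > 0" "c > 0" "C > 0" and quad: "\<And>h. norm h \<le> r \<Longrightarrow>
      c * (norm h)\<^sup>2 \<le> W a - W (a + h) \<and> W a - W (a + h) \<le> C * (norm h)\<^sup>2"
    using quadratic by blast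
  obtain d where "d > 0" and near: "\<And>y. dist y a < d \<Longrightarrow> dist (\<phi> y) (\<phi> a) < \<bar>\<phi> a\<bar> / 2"
    using assms unfolding continuous_at_eps_delta by (metis half_gt_zero zero_less_abs_iff)
  have "(\<phi> a)\<^sup>2 / 4 / C\<^sup>2 / (norm h) ^ 4 \<le> (\<phi> (a + h))\<^sup>2 / (W a - W (a + h))\<^sup>2"
    if h: "norm h \<le> min r (d / 2)" for h
  proof (cases "h = 0")
    case False
    from quad[of h] h have "c * (norm h)\<^sup>2 \<le> W a - W (a + h)" "W a - W (a + h) \<le> C * (norm h)\<^sup>2"
      by auto
    moreover have "0 < c * (norm h)\<^sup>2" using \<open>c > 0\<close> False by simp
    ultimately have "(W a - W (a + h))\<^sup>2 \<le> C\<^sup>2 * (norm h) ^ 4" "0 < W a - W (a + h)"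
      using power_mono[of "W a - W (a + h)" "C * (norm h)\<^sup>2" 2]
      by (auto simp: power_mult_distrib simp flip: power_mult)
    moreover have "dist (\<phi> (a + h)) (\<phi> a) < \<bar>\<phi> a\<bar> / 2"
      using near[of "a + h"] h \<open>d > 0\<close> by (simp add: dist_norm)
    then have "\<bar>\<phi> a\<bar> / 2 \<le> \<bar>\<phi> (a + h)\<bar>" unfolding dist_real_def by arith
    then have "(\<phi> a)\<^sup>2 / 4 \<le> (\<phi> (a + h))\<^sup>2"
      using power_mono[of "\<bar>\<phi> a\<bar> / 2" "\<bar>\<phi> (a + h)\<bar>" 2] by (simp add: power_divide)
    ultimately have "(\<phi> a)\<^sup>2 / 4 / (C\<^sup>2 * (norm h) ^ 4) \<le> (\<phi> (a + h))\<^sup>2 / (W a - W (a + h))\<^sup>2"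
      using \<open>C > 0\<close> False by (intro frac_le) auto
    then show ?thesis by (simp add: divide_divide_eq_left mult.assoc)
  qed simp
  then show ?thesis
    using that[of "min r (d / 2)" "(\<phi> a)\<^sup>2 / 4 / C\<^sup>2"] \<open>r > 0\<close> \<open>d > 0\<close> \<open>C > 0\<close> assms(2) by auto
qed

lemma profile_sq_upper_bound:
  assumes "\<phi> a = 0" and "t > 0" and lip: "\<And>h. norm h \<le> t \<Longrightarrow> \<bar>\<phi> (a + h) - \<phi> a\<bar> \<le> K * norm h"
  obtains r D where "r > 0" "D \<ge> 0"
    "\<And>h. norm h \<le> r \<Longrightarrow> (\<phi> (a + h))\<^sup>2 / (W a - W (a + h))\<^sup>2 \<le> D / (norm h)\<^sup>2"
proof -
  obtain r c C where "r > 0" "c > 0" and quad: "\<And>h. norm h \<le> r \<Longrightarrow> c * (norm h)\<^sup>2 \<le> W a - W (a + h)"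
    using quadratic by blast
  have "(\<phi> (a + h))\<^sup>2 / (W a - W (a + h))\<^sup>2 \<le> K\<^sup>2 / c\<^sup>2 / (norm h)\<^sup>2" if h: "norm h \<le> min r t" for h
  proof (cases "h = 0")
    case False
    have "0 < c * (norm h)\<^sup>2" using \<open>c > 0\<close> False by simp
    then have "c\<^sup>2 * (norm h) ^ 4 \<le> (W a - W (a + h))\<^sup>2"
      using quad[of h] h power_mono[of "c * (norm h)\<^sup>2" "W a - W (a + h)" 2]
      by (auto simp: power_mult_distrib simp flip: power_mult)
    moreover have "(\<phi> (a + h))\<^sup>2 \<le> K\<^sup>2 * (norm h)\<^sup>2"
      using lip[of h] h assms(1) power_mono[of "\<bar>\<phi> (a + h)\<bar>" "K * norm h" 2]
      by (auto simp: power_mult_distrib)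
    ultimately have "(\<phi> (a + h))\<^sup>2 / (W a - W (a + h))\<^sup>2 \<le> K\<^sup>2 * (norm h)\<^sup>2 / (c\<^sup>2 * (norm h) ^ 4)"
      using \<open>c > 0\<close> False by (intro frac_le) auto
    also have "\<dots> = K\<^sup>2 / c\<^sup>2 / (norm h)\<^sup>2" using False by (simp add: field_simps power_eq_if)
    finally show ?thesis .
  qed (simp add: assms(1))
  then show ?thesis by (rule that[of "min r t" "K\<^sup>2 / c\<^sup>2", rotated 2]) (use \<open>r > 0\<close> \<open>t > 0\<close> in auto)
qed

lemma integrable_profile_sq_imp_zero:
  assumes "isCont \<phi> a" and "T3_periodic \<phi>"
    and "integrable T3meas (\<lambda>q. (\<phi> q)\<^sup>2 / (W a - W q)\<^sup>2)"
  shows "\<phi> a = 0"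
proof (rule ccontr)
  assume "\<phi> a \<noteq> 0"
  then obtain \<rho> \<kappa> where "\<rho> > 0" "\<kappa> > 0"
    and lower: "\<And>h. norm h \<le> \<rho> \<Longrightarrow> \<kappa> / (norm h) ^ 4 \<le> (\<phi> (a + h))\<^sup>2 / (W a - W (a + h))\<^sup>2"
    using profile_sq_lower_bound[OF assms(1)] by blast
  obtain a' where "a' \<in> T3dom" "torus_eq a' a" using T3dom_representative by blast
  have "\<kappa> / (norm (y - a')) ^ 4 \<le> (\<phi> y)\<^sup>2 / (W a - W y)\<^sup>2" if "norm (y - a') \<le> \<rho>" for y
  proof -
    have y: "torus_eq y (a + (y - a'))" using torus_eq_translate[OF \<open>torus_eq a' a\<close>] .
    show ?thesis
      using lower[OF that] T3_periodicD[OF assms(2) y] T3_periodicD[OF periodic y] by simp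
  qed
  then have "\<not> integrable T3meas (\<lambda>q. (\<phi> q)\<^sup>2 / (W a - W q)\<^sup>2)"
    by (intro not_integrable_T3meas_inverse_fourth_power[OF \<open>a' \<in> T3dom\<close> \<open>\<rho> > 0\<close> \<open>\<kappa> > 0\<close>])
      simp_all
  then show False using assms(3) by contradiction
qed

lemma profile_sq_dominated:
  assumes "continuous_on UNIV \<phi>" and "T3_periodic \<phi>" and "\<phi> a = 0"
    and "t > 0" and "\<And>h. norm h \<le> t \<Longrightarrow> \<bar>\<phi> (a + h) - \<phi> a\<bar> \<le> K * norm h"
  obtains A D L where "finite L"
    "\<And>q. q \<in> T3dom \<Longrightarrow> (\<phi> q)\<^sup>2 / (W a - W q)\<^sup>2 \<le> A + D * (\<Sum>b\<in>L. 1 / (norm (q - b))\<^sup>2)"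
proof -
  obtain r D where "r > 0" "D \<ge> 0" and upper:
    "\<And>h. norm h \<le> r \<Longrightarrow> (\<phi> (a + h))\<^sup>2 / (W a - W (a + h))\<^sup>2 \<le> D / (norm h)\<^sup>2"
    using profile_sq_upper_bound[OF assms(3-5)] by blast
  obtain m where "m > 0" and near: "\<And>q. W a - m < W q \<Longrightarrow> \<exists>b. torus_eq b a \<and> norm (q - b) < r"
    using near_max_imp_near_translate[OF \<open>r > 0\<close>] by blast
  have "bounded (\<phi> ` cbox (\<chi> i. - pi) (\<chi> i. pi))"
    by (intro compact_imp_bounded compact_continuous_image continuous_on_subset[OF assms(1)]) auto
  then obtain \<Phi> where "\<forall>y\<in>\<phi> ` cbox (\<chi> i. - pi) (\<chi> i. pi). norm y \<le> \<Phi>"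
    unfolding bounded_iff by blast
  then have \<Phi>: "\<And>q. q \<in> T3dom \<Longrightarrow> \<bar>\<phi> q\<bar> \<le> \<Phi>" using T3dom_subset_cbox by auto
  have "bounded T3dom" using T3dom_subset_cbox bounded_cbox bounded_subset by blast
  then obtain R where R: "\<And>q. q \<in> T3dom \<Longrightarrow> norm q \<le> R" unfolding bounded_iff by blast
  define L where "L = {b. torus_eq b a \<and> norm b \<le> R + r}"
  have "finite L" unfolding L_def by (rule finite_torus_translates)
  moreover have "(\<phi> q)\<^sup>2 / (W a - W q)\<^sup>2 \<le> \<Phi>\<^sup>2 / m\<^sup>2 + D * (\<Sum>b\<in>L. 1 / (norm (q - b))\<^sup>2)"
    if q: "q \<in> T3dom" for q
  proof -
    have "0 \<le> \<Phi>\<^sup>2 / m\<^sup>2" "0 \<le> D * (\<Sum>b\<in>L. 1 / (norm (q - b))\<^sup>2)"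
      using \<open>D \<ge> 0\<close> by (simp_all add: sum_nonneg)
    note nonneg = this
    consider "W q \<le> W a - m" | b where "torus_eq b a" "norm (q - b) < r"
      using near by force
    then show ?thesis
    proof cases
      case 1
      then have "m\<^sup>2 \<le> (W a - W q)\<^sup>2" using \<open>m > 0\<close> by (intro power_mono) auto
      moreover have "(\<phi> q)\<^sup>2 \<le> \<Phi>\<^sup>2" using \<Phi>[OF q] by (metis abs_ge_zero power2_abs power_mono)
      ultimately have "(\<phi> q)\<^sup>2 / (W a - W q)\<^sup>2 \<le> \<Phi>\<^sup>2 / m\<^sup>2" using \<open>m > 0\<close> by (intro frac_le) auto
      then show ?thesis using nonneg by linarith
    next
      case (2 b)
      have "norm b \<le> norm q + norm (q - b)" using norm_triangle_ineq4[of q "q - b"] by simp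
      then have "b \<in> L" using 2 R[OF q] unfolding L_def by simp
      have q': "torus_eq q (a + (q - b))" using torus_eq_translate[OF \<open>torus_eq b a\<close>] .
      have "(\<phi> q)\<^sup>2 / (W a - W q)\<^sup>2 \<le> D * (1 / (norm (q - b))\<^sup>2)"
        using upper[of "q - b"] 2 T3_periodicD[OF assms(2) q'] T3_periodicD[OF periodic q'] by simp
      also have "\<dots> \<le> D * (\<Sum>b\<in>L. 1 / (norm (q - b))\<^sup>2)"
        using \<open>finite L\<close> \<open>b \<in> L\<close> \<open>D \<ge> 0\<close> by (intro mult_left_mono member_le_sum) auto
      finally show ?thesis using nonneg by linarith
    qed
  qed
  ultimately show ?thesis using that by blast
qed

lemma zero_imp_integrable_profile_sq:
  assumes "continuous_on UNIV \<phi>" and "T3_periodic \<phi>" and "\<phi> a = 0"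
    and "t > 0" and "\<And>h. norm h \<le> t \<Longrightarrow> \<bar>\<phi> (a + h) - \<phi> a\<bar> \<le> K * norm h"
  shows "integrable T3meas (\<lambda>q. (\<phi> q)\<^sup>2 / (W a - W q)\<^sup>2)"
proof -
  obtain A D L where "finite L"
    and bound: "\<And>q. q \<in> T3dom \<Longrightarrow> (\<phi> q)\<^sup>2 / (W a - W q)\<^sup>2 \<le> A + D * (\<Sum>b\<in>L. 1 / (norm (q - b))\<^sup>2)"
    using profile_sq_dominated[OF assms] by metis
  define F where "F q = A + D * (\<Sum>b\<in>L. 1 / (norm (q - b))\<^sup>2)" for q
  have "integrable T3meas F"
    unfolding F_def using finite_measure_T3meas \<open>finite L\<close>
    by (intro Bochner_Integration.integrable_add Bochner_Integration.integrable_mult_right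
        Bochner_Integration.integrable_sum integrable_T3meas_inverse_square_dist
        finite_measure.integrable_const)
  moreover have "(\<lambda>q. (\<phi> q)\<^sup>2 / (W a - W q)\<^sup>2) \<in> borel_measurable T3meas"
    using continuous_on_imp_T3meas_measurable[OF assms(1)] W_measurable
    by (intro borel_measurable_divide borel_measurable_power borel_measurable_diff) simp_all
  moreover have "AE q in T3meas. norm ((\<phi> q)\<^sup>2 / (W a - W q)\<^sup>2) \<le> norm (F q)"
  proof (rule AE_I2)
    fix q assume "q \<in> space T3meas"
    then have "(\<phi> q)\<^sup>2 / (W a - W q)\<^sup>2 \<le> F q" unfolding F_def by (intro bound) simp
    then show "norm ((\<phi> q)\<^sup>2 / (W a - W q)\<^sup>2) \<le> norm (F q)" by simp
  qed
  ultimately show ?thesis by (rule Bochner_Integration.integrable_bound)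
qed

lemma integrable_profile_sq_iff:
  assumes "continuous_on UNIV \<phi>" and "T3_periodic \<phi>"
    and "\<exists>t>0. \<exists>K. \<forall>h. norm h \<le> t \<longrightarrow> \<bar>\<phi> (a + h) - \<phi> a\<bar> \<le> K * norm h"
  shows "integrable T3meas (\<lambda>q. (\<phi> q)\<^sup>2 / (W a - W q)\<^sup>2) \<longleftrightarrow> \<phi> a = 0"
proof
  show "\<phi> a = 0" if "integrable T3meas (\<lambda>q. (\<phi> q)\<^sup>2 / (W a - W q)\<^sup>2)"
    using integrable_profile_sq_imp_zero[OF _ assms(2) that] assms(1)
    by (simp add: continuous_on_eq_continuous_at)
  show "integrable T3meas (\<lambda>q. (\<phi> q)\<^sup>2 / (W a - W q)\<^sup>2)" if "\<phi> a = 0"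
    using zero_imp_integrable_profile_sq[OF assms(1,2) that] assms(3) by blast
qed

lemma L2_T3_profile_iff:
  assumes "continuous_on UNIV \<phi>" and "T3_periodic \<phi>"
    and "\<exists>t>0. \<exists>K. \<forall>h. norm h \<le> t \<longrightarrow> \<bar>\<phi> (a + h) - \<phi> a\<bar> \<le> K * norm h" and "\<mu> \<noteq> 0"
  shows "(\<lambda>q. of_real (\<mu> * \<phi> q / (W a - W q))) \<in> L2_T3 \<longleftrightarrow> \<phi> a = 0"
proof -
  have [measurable]: "\<phi> \<in> borel_measurable T3meas"
    by (rule continuous_on_imp_T3meas_measurable[OF assms(1)])
  have norm_sq: "(\<lambda>q. (cmod (of_real (\<mu> * \<phi> q / (W a - W q))))\<^sup>2)
      = (\<lambda>q. \<mu>\<^sup>2 * ((\<phi> q)\<^sup>2 / (W a - W q)\<^sup>2))"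
    by (simp only: norm_of_real power2_abs power_mult_distrib power_divide) (simp add: mult.assoc)
  have scale: "integrable T3meas (\<lambda>q. \<mu>\<^sup>2 * ((\<phi> q)\<^sup>2 / (W a - W q)\<^sup>2))
      \<longleftrightarrow> integrable T3meas (\<lambda>q. (\<phi> q)\<^sup>2 / (W a - W q)\<^sup>2)"
    using assms(4) by (subst integrable_mult_left_iff) simp
  have "(\<lambda>q. complex_of_real (\<mu> * \<phi> q / (W a - W q))) \<in> borel_measurable T3meas" by measurable
  then show ?thesis
    unfolding L2_T3_def mem_Collect_eq norm_sq scale integrable_profile_sq_iff[OF assms(1-3)] by blast
qed

end

lemma periodic_peakI:
  assumes "T3_periodic W" and "neg_def_hessian_at W a"
    and "\<And>q. W q \<le> W a" and "\<And>q. W q = W a \<Longrightarrow> torus_eq q a"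
  shows "periodic_peak W a"
proof
  obtain g where "\<And>x. (W has_derivative (\<lambda>h. g x \<bullet> h)) (at x)"
    using assms(2) unfolding neg_def_hessian_at_def by blast
  then show "continuous_on UNIV W"
    by (intro continuous_at_imp_continuous_on) (blast intro: has_derivative_continuous)
  show "\<exists>r>0. \<exists>c>0. \<exists>C>0. \<forall>h. norm h \<le> r \<longrightarrow>
          c * (norm h)\<^sup>2 \<le> W a - W (a + h) \<and> W a - W (a + h) \<le> C * (norm h)\<^sup>2"
    using neg_def_hessian_at_max_quadratic_bounds[OF assms(2,3)] .
qed (use assms in auto)

lemma is_eigenfunction_at_peak_iff:
  assumes "periodic_peak (w p) a" and "continuous_on UNIV \<phi>" and "T3_periodic \<phi>"
    and "\<exists>x. \<phi> x \<noteq> 0" and "\<mu> \<noteq> 0"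
  shows "is_eigenfunction \<mu> \<phi> w p (w p a) f \<longleftrightarrow>
           f \<in> L2_T3 \<and> \<mu> * (\<integral>s. (\<phi> s)\<^sup>2 / (w p a - w p s) \<partial>T3meas) = 1 \<and>
           (\<exists>C. C \<noteq> 0 \<and> (AE q in T3meas. f q = C * of_real (\<mu> * \<phi> q / (w p a - w p q))))"
proof (cases "f \<in> L2_T3")
  case True
  interpret periodic_peak "w p" a by fact
  have f: "f \<in> borel_measurable T3meas" using True by (simp add: L2_T3_def)
  have \<phi>: "\<phi> \<in> borel_measurable T3meas"
    by (rule continuous_on_imp_T3meas_measurable[OF assms(2)])
  have "\<not> (AE q in T3meas. \<phi> q = 0)" using not_AE_T3meas_zero assms(2-4) by blast
  note rank_one = rank_one_eigenfunction_iff[OF W_measurable \<phi> f AE_below_max this assms(5)]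
  show ?thesis unfolding is_eigenfunction_def Hop_def rank_one using True by blast
qed (simp add: is_eigenfunction_def)

lemma is_eigenvalue_at_peak_iff:
  assumes "periodic_peak (w p) a" and "continuous_on UNIV \<phi>" and "T3_periodic \<phi>"
    and "\<exists>x. \<phi> x \<noteq> 0" and "\<mu> \<noteq> 0"
    and "\<exists>t>0. \<exists>K. \<forall>h. norm h \<le> t \<longrightarrow> \<bar>\<phi> (a + h) - \<phi> a\<bar> \<le> K * norm h"
  shows "is_eigenvalue \<mu> \<phi> w p (w p a) \<longleftrightarrow>
           \<phi> a = 0 \<and> \<mu> * (\<integral>s. (\<phi> s)\<^sup>2 / (w p a - w p s) \<partial>T3meas) = 1"
proof -
  interpret periodic_peak "w p" a by fact
  define g where "g q = complex_of_real (\<mu> * \<phi> q / (w p a - w p q))" for q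
  note eigenfunction_iff = is_eigenfunction_at_peak_iff[where w = w and p = p, OF assms(1-5),
      folded g_def]
  have g_L2: "g \<in> L2_T3 \<longleftrightarrow> \<phi> a = 0"
    unfolding g_def by (rule L2_T3_profile_iff[OF assms(2,3,6,5)])
  show ?thesis
  proof
    assume "is_eigenvalue \<mu> \<phi> w p (w p a)"
    then obtain f C where f: "f \<in> L2_T3" "\<mu> * (\<integral>s. (\<phi> s)\<^sup>2 / (w p a - w p s) \<partial>T3meas) = 1"
      "C \<noteq> 0" "AE q in T3meas. f q = C * g q"
      unfolding is_eigenvalue_def eigenfunction_iff by blast
    have [measurable]: "\<phi> \<in> borel_measurable T3meas"
      by (rule continuous_on_imp_T3meas_measurable[OF assms(2)])
    have "g \<in> borel_measurable T3meas" unfolding g_def by measurable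
    moreover have "f \<in> borel_measurable T3meas" using f(1) by (simp add: L2_T3_def)
    ultimately have "g \<in> L2_T3" using L2_T3_AE_cmult_iff f by blast
    then show "\<phi> a = 0 \<and> \<mu> * (\<integral>s. (\<phi> s)\<^sup>2 / (w p a - w p s) \<partial>T3meas) = 1"
      using g_L2 f(2) by blast
  next
    assume "\<phi> a = 0 \<and> \<mu> * (\<integral>s. (\<phi> s)\<^sup>2 / (w p a - w p s) \<partial>T3meas) = 1"
    then have "is_eigenfunction \<mu> \<phi> w p (w p a) g"
      unfolding eigenfunction_iff using g_L2 by (auto intro!: exI[of _ 1])
    then show "is_eigenvalue \<mu> \<phi> w p (w p a)" unfolding is_eigenvalue_def by blast
  qed
qed

theorem lemma2p5:
  fixes \<phi> :: "real^3 \<Rightarrow> real" and w :: "real^3 \<Rightarrow> real^3 \<Rightarrow> real"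
    and p0 q0 :: "real^3" and \<delta> :: real and q0map :: "real^3 \<Rightarrow> real^3"
    and p :: "real^3" and \<mu> :: real
  assumes phi_per: "T3_periodic \<phi>"
    and phi_an: "real_analytic_on \<phi> UNIV"
    and phi_nz: "\<exists>x. \<phi> x \<noteq> 0"
    and w_per: "T3_periodic2 w"
    and w_an: "real_analytic_on (\<lambda>z. w (fst z) (snd z)) UNIV"
    and w_max: "\<forall>p q. w p q \<le> w p0 q0"
    and w_max_unique: "\<forall>p q. w p q = w p0 q0 \<longrightarrow> torus_eq p p0 \<and> torus_eq q q0"
    and w_max_nondeg: "neg_def_hessian_at (\<lambda>z. w (fst z) (snd z)) (p0, q0)"
    and delta_pos: "\<delta> > 0"
    and q0_an: "\<forall>i. real_analytic_on (\<lambda>x. q0map x $ i) (ball p0 \<delta>)"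
    and q0_max: "\<forall>p'\<in>ball p0 \<delta>. \<forall>q. w p' q \<le> w p' (q0map p')"
    and q0_unique: "\<forall>p'\<in>ball p0 \<delta>. \<forall>q. w p' q = w p' (q0map p') \<longrightarrow> torus_eq q (q0map p')"
    and q0_nondeg: "\<forall>p'\<in>ball p0 \<delta>. neg_def_hessian_at (w p') (q0map p')"
    and p_in: "p \<in> ball p0 \<delta>"
    and mu_pos: "\<mu> > 0"
  shows "(is_eigenvalue \<mu> \<phi> w p (Mmax w p) \<longleftrightarrow>
            \<phi> (q0map p) = 0 \<and> Delta \<mu> \<phi> w p = 0)
       \<and> (\<phi> (q0map p) = 0 \<and> Delta \<mu> \<phi> w p = 0 \<longleftrightarrow>
            \<phi> (q0map p) = 0 \<and> \<mu> = mu_crit \<phi> w p)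
       \<and> (is_eigenvalue \<mu> \<phi> w p (Mmax w p) \<longrightarrow>
            (\<lambda>q. of_real (mu_crit \<phi> w p * \<phi> q / (Mmax w p - w p q))) \<in> L2_T3 \<and>
            (\<forall>f. is_eigenfunction \<mu> \<phi> w p (Mmax w p) f \<longleftrightarrow>
               f \<in> L2_T3 \<and> (\<exists>C::complex. C \<noteq> 0 \<and>
                 (AE q in T3meas. f q = C * of_real (mu_crit \<phi> w p * \<phi> q / (Mmax w p - w p q))))))"
proof -
  interpret periodic_peak "w p" "q0map p"
    using q0_max q0_unique q0_nondeg p_in
    by (intro periodic_peakI T3_periodic2_imp_T3_periodic[OF w_per]) auto
  have peak: "periodic_peak (w p) (q0map p)" ..
  have \<phi>_cont: "continuous_on UNIV \<phi>"
    using real_analytic_on_imp_continuous_on[OF phi_an] by simp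
  have \<phi>_lip: "\<exists>t>0. \<exists>K. \<forall>h. norm h \<le> t \<longrightarrow> \<bar>\<phi> (q0map p + h) - \<phi> (q0map p)\<bar> \<le> K * norm h"
    using real_analytic_on_locally_lipschitz[OF phi_an] by simp
  have M: "Mmax w p = w p (q0map p)"
    unfolding Mmax_def by (intro cSup_eq_maximum) (auto intro: max)
  define I where "I = (\<integral>s. (\<phi> s)\<^sup>2 / (w p (q0map p) - w p s) \<partial>T3meas)"
  have Delta: "Delta \<mu> \<phi> w p = 1 - \<mu> * I" and mu_crit: "mu_crit \<phi> w p = 1 / I"
    unfolding Delta_def mu_crit_def M I_def by simp_all
  have eigenvalue: "is_eigenvalue \<mu> \<phi> w p (Mmax w p) \<longleftrightarrow> \<phi> (q0map p) = 0 \<and> \<mu> * I = 1"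
    unfolding M I_def using mu_pos
    by (intro is_eigenvalue_at_peak_iff[where w = w and p = p, OF peak \<phi>_cont phi_per phi_nz _ \<phi>_lip]) simp
  have crit: "\<mu> * I = 1 \<longleftrightarrow> \<mu> = 1 / I" using mu_pos by (cases "I = 0") (auto simp: field_simps)
  show ?thesis
  proof (intro conjI impI)
    assume "is_eigenvalue \<mu> \<phi> w p (Mmax w p)"
    then have "\<phi> (q0map p) = 0" "\<mu> * I = 1" using eigenvalue by auto
    then have "mu_crit \<phi> w p = \<mu>" using crit mu_crit by simp
    show "(\<lambda>q. of_real (mu_crit \<phi> w p * \<phi> q / (Mmax w p - w p q))) \<in> L2_T3"
      unfolding \<open>mu_crit \<phi> w p = \<mu>\<close> M
      using L2_T3_profile_iff[OF \<phi>_cont phi_per \<phi>_lip] mu_pos \<open>\<phi> (q0map p) = 0\<close> by simp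
    show "\<forall>f. is_eigenfunction \<mu> \<phi> w p (Mmax w p) f \<longleftrightarrow> f \<in> L2_T3 \<and> (\<exists>C. C \<noteq> 0 \<and>
        (AE q in T3meas. f q = C * of_real (mu_crit \<phi> w p * \<phi> q / (Mmax w p - w p q))))"
      unfolding \<open>mu_crit \<phi> w p = \<mu>\<close> M
      using is_eigenfunction_at_peak_iff[where w = w and p = p, OF peak \<phi>_cont phi_per phi_nz]
        mu_pos \<open>\<mu> * I = 1\<close> unfolding I_def by simp
  qed (use eigenvalue Delta mu_crit crit in auto)
qed

end
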